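(* Let $c$ be a twisted cap-cup cycle with $T(c) = \pm 2$. Then there exists an unknot diagram $g \in \mathbb{CC}$ such that $W(g) = W(c)$ and $\mathrm{ccc}(g) = U(c)$.
   Context: $\mathbb{CC}$ is the free (strict) braided monoidal category generated by objects $\uparrow, \downarrow$ and four generating morphisms, with no equations imposed between them: caps $\mathrm{cap}_r : I \to \uparrow \otimes \downarrow$, $\mathrm{cap}_l : I \to \downarrow \otimes \uparrow$ and cups $\mathrm{cup}_r : \downarrow \otimes \uparrow \to I$, $\mathrm{cup}_l : \uparrow \otimes \downarrow \to I$. Wires are oriented according to their labels. A knot (diagram) in $\mathbb{CC}$ is a morphism $I \to I$ whose string diagram has a single connected component; it is an unknot diagram if the knot it depicts (interpreting caps and cups as arcs) is isotopic to the unknot in the usual (general) sense. The writhe $W(g)$ of a diagram is the sum of the signs of its crossings (the braiding $\sigma$ between equally oriented strands counts $+1$, $\sigma^{-1}$ counts $-1$, i.e.\ the standard sign of oriented crossings). The turning numbers of the generators are $t(\mathrm{cap}_r) = +1$, $t(\mathrm{cap}_l) = -1$, $t(\mathrm{cup}_r) = -1$, $t(\mathrm{cup}_l) = +1$. A cap-cup cycle is a finite sequence of elements of $\{\mathrm{cap}_l, \mathrm{cap}_r, \mathrm{cup}_l, \mathrm{cup}_r\}$ up to cyclic permutation in which caps and cups alternate. For a knot $g$, $\mathrm{ccc}(g)$ is the cap-cup cycle recorded by following the strand along its orientation once around. A twisted cap-cup is an element $(x, w)$ of $\{\mathrm{cap}_l, \mathrm{cap}_r, \mathrm{cup}_l,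 \mathrm{cup}_r\} \times \mathbb{Z}$ (thought of as the cap/cup $x$ composed with braidings of total writhe $w$); its turning number is $T((x,w)) = (-1)^{|w|} t(x)$ and its writhe is $W((x,w)) = w$. A twisted cap-cup cycle is a finite sequence of twisted cap-cups up to cyclic permutation in which caps and cups alternate; its turning number $T(c)$ and writhe $W(c)$ are the sums of those of its elements, and $U(c)$ is the cap-cup cycle obtained by forgetting the integer component of each element. *)

theory Defs
  imports Main
begin

text \<open>Orientations of wires: True = up arrow, False = down arrow.
  A diagram is a list of slices read from bottom (domain) to top (codomain).
  Each slice is a single generator tensored with identities: a cap/cup at
  position k, or an elementary braiding between the wires at positions k and k+1
  (Cross True k = sigma, Cross False k = sigma inverse), for any orientations.\<close>

datatype gen = CapR | CapL | CupR | CupL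

datatype slice = Gen gen nat | Cross bool nat

fun is_cap :: "gen \<Rightarrow> bool" where
  "is_cap CapR = True" | "is_cap CapL = True" | "is_cap CupR = False" | "is_cap CupL = False"

fun flip_gen :: "gen \<Rightarrow> gen" where
  "flip_gen CapR = CapL" | "flip_gen CapL = CapR" | "flip_gen CupR = CupL" | "flip_gen CupL = CupR"

fun turn :: "gen \<Rightarrow> int" where
  "turn CapR = 1" | "turn CapL = -1" | "turn CupR = -1" | "turn CupL = 1"

fun pos :: "slice \<Rightarrow> nat" where
  "pos (Gen g k) = k" | "pos (Cross b k) = k"

fun setpos :: "nat \<Rightarrow> slice \<Rightarrow> slice" where
  "setpos n (Gen g k) = Gen g n" | "setpos n (Cross b k) = Cross b n"

fun inw :: "slice \<Rightarrow> nat" where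
  "inw (Gen g k) = (if is_cap g then 0 else 2)" | "inw (Cross b k) = 2"

fun outw :: "slice \<Rightarrow> nat" where
  "outw (Gen g k) = (if is_cap g then 2 else 0)" | "outw (Cross b k) = 2"

fun step :: "slice \<Rightarrow> bool list \<Rightarrow> bool list option" where
  "step (Gen CapR k) w = (if k \<le> length w then Some (take k w @ [True, False] @ drop k w) else None)"
| "step (Gen CapL k) w = (if k \<le> length w then Some (take k w @ [False, True] @ drop k w) else None)"
| "step (Gen CupR k) w = (if Suc k < length w \<and> w ! k = False \<and> w ! Suc k = True
       then Some (take k w @ drop (k + 2) w) else None)"
| "step (Gen CupL k) w = (if Suc k < length w \<and> w ! k = True \<and> w ! Suc k = False
       then Some (take k w @ drop (k + 2) w) else None)"
| "step (Cross b k) w = (if Suc k < length w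
       then Some (take k w @ [w ! Suc k, w ! k] @ drop (k + 2) w) else None)"

fun run :: "slice list \<Rightarrow> bool list \<Rightarrow> bool list option" where
  "run [] w = Some w"
| "run (s # ss) w = (case step s w of None \<Rightarrow> None | Some w' \<Rightarrow> run ss w')"

definition closed :: "slice list \<Rightarrow> bool" where
  "closed d \<longleftrightarrow> run d [] = Some []"

definition lvl :: "slice list \<Rightarrow> nat \<Rightarrow> bool list" where
  "lvl d i = the (run (take i d) [])"

definition points :: "slice list \<Rightarrow> (nat \<times> nat) set" where
  "points d = {(i, j). i \<le> length d \<and> j < length (lvl d i)}"

text \<open>Following the strand along its orientation: the next boundary point.\<close>
definition nxt :: "slice list \<Rightarrow> nat \<times> nat \<Rightarrow> nat \<times> nat" where
  "nxt d p = (case p of (i, j) \<Rightarrow>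
     (if lvl d i ! j then
        (case d ! i of
           Cross b k \<Rightarrow> (Suc i, if j = k then Suc k else if j = Suc k then k else j)
         | Gen g k \<Rightarrow>
             (if is_cap g then (Suc i, if j < k then j else j + 2)
              else if j < k then (Suc i, j) else if j = k then (i, Suc k)
              else if j = Suc k then (i, k) else (Suc i, j - 2)))
      else
        (case d ! (i - 1) of
           Cross b k \<Rightarrow> (i - 1, if j = k then Suc k else if j = Suc k then k else j)
         | Gen g k \<Rightarrow>
             (if is_cap g then
                (if j < k then (i - 1, j) else if j = k then (i, Suc k)
                 else if j = Suc k then (i, k) else (i - 1, j - 2))
              else (i - 1, if j < k then j else j + 2)))))"

text \<open>The cap or cup passed (turned around) when leaving point p along the orientation.\<close>
definition ev :: "slice list \<Rightarrow> nat \<times> nat \<Rightarrow> gen option" where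
  "ev d p = (case p of (i, j) \<Rightarrow>
     (if lvl d i ! j then
        (case d ! i of Gen g k \<Rightarrow> if \<not> is_cap g \<and> (j = k \<or> j = Suc k) then Some g else None
                     | Cross b k \<Rightarrow> None)
      else
        (case d ! (i - 1) of Gen g k \<Rightarrow> if is_cap g \<and> (j = k \<or> j = Suc k) then Some g else None
                           | Cross b k \<Rightarrow> None)))"

definition knot :: "slice list \<Rightarrow> bool" where
  "knot d \<longleftrightarrow> closed d \<and> points d \<noteq> {} \<and>
     (\<forall>p \<in> points d. \<forall>q \<in> points d. \<exists>m. (nxt d ^^ m) p = q)"

text \<open>Cap-cup cycle read once around the knot starting at point p (as a list;
  cap-cup cycles are lists up to cyclic permutation).\<close>
definition ccc_from :: "slice list \<Rightarrow> nat \<times> nat \<Rightarrow> gen list" where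
  "ccc_from d p = concat (map (\<lambda>m. case ev d ((nxt d ^^ m) p) of None \<Rightarrow> [] | Some g \<Rightarrow> [g])
                              [0..<card (points d)])"

definition cyc_eq :: "'a list \<Rightarrow> 'a list \<Rightarrow> bool" where
  "cyc_eq xs ys \<longleftrightarrow> (\<exists>n. rotate n xs = ys)"

definition writhe :: "slice list \<Rightarrow> int" where
  "writhe d = (\<Sum>i<length d. case d ! i of
       Gen g k \<Rightarrow> 0
     | Cross b k \<Rightarrow> (if b then 1 else -1) *
                    (if lvl d i ! k = lvl d i ! Suc k then 1 else -1))"

inductive dmove :: "slice list \<Rightarrow> slice list \<Rightarrow> bool" where
  exch_l: "pos t + inw t \<le> pos s \<Longrightarrow>
     dmove (d1 @ [s, t] @ d2) (d1 @ [t, setpos (pos s + outw t - inw t) s] @ d2)"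
| exch_r: "pos s + outw s \<le> pos t \<Longrightarrow>
     dmove (d1 @ [s, t] @ d2) (d1 @ [setpos (pos t + inw s - outw s) t, s] @ d2)"
| r2: "dmove (d1 @ [Cross b k, Cross (\<not> b) k] @ d2) (d1 @ d2)"
| r3: "dmove (d1 @ [Cross b k, Cross b (Suc k), Cross b k] @ d2)
             (d1 @ [Cross b (Suc k), Cross b k, Cross b (Suc k)] @ d2)"
| nat_cap1: "is_cap g \<Longrightarrow>
     dmove (d1 @ [Gen g (Suc k), Cross b k, Cross b (Suc k)] @ d2) (d1 @ [Gen g k] @ d2)"
| nat_cap2: "is_cap g \<Longrightarrow>
     dmove (d1 @ [Gen g k, Cross b (Suc k), Cross b k] @ d2) (d1 @ [Gen g (Suc k)] @ d2)"
| nat_cup1: "\<not> is_cap g \<Longrightarrow>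
     dmove (d1 @ [Cross b k, Cross b (Suc k), Gen g k] @ d2) (d1 @ [Gen g (Suc k)] @ d2)"
| nat_cup2: "\<not> is_cap g \<Longrightarrow>
     dmove (d1 @ [Cross b (Suc k), Cross b k, Gen g (Suc k)] @ d2) (d1 @ [Gen g k] @ d2)"
| zig1: "is_cap g \<Longrightarrow> \<not> is_cap h \<Longrightarrow> dmove (d1 @ [Gen g k, Gen h (Suc k)] @ d2) (d1 @ d2)"
| zig2: "is_cap g \<Longrightarrow> \<not> is_cap h \<Longrightarrow> dmove (d1 @ [Gen g (Suc k), Gen h k] @ d2) (d1 @ d2)"
| twist_cap: "is_cap g \<Longrightarrow> dmove (d1 @ [Gen g k, Cross b k] @ d2) (d1 @ [Gen (flip_gen g) k] @ d2)"
| twist_cup: "\<not> is_cap g \<Longrightarrow> dmove (d1 @ [Cross b k, Gen g k] @ d2) (d1 @ [Gen (flip_gen g) k] @ d2)"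

definition isotopic :: "slice list \<Rightarrow> slice list \<Rightarrow> bool" where
  "isotopic = equivclp (\<lambda>d e. closed d \<and> closed e \<and> dmove d e)"

definition unknot_diagram :: "slice list \<Rightarrow> bool" where
  "unknot_diagram d \<longleftrightarrow> knot d \<and> isotopic d [Gen CapR 0, Gen CupL 0]"

text \<open>A twisted cap-cup cycle is a list of twisted cap-cups up to cyclic permutation,
  with caps and cups alternating cyclically.\<close>
definition alternating :: "(gen \<times> int) list \<Rightarrow> bool" where
  "alternating c \<longleftrightarrow> (\<forall>i < length c.
     is_cap (fst (c ! i)) \<noteq> is_cap (fst (c ! (Suc i mod length c))))"

definition tT :: "(gen \<times> int) list \<Rightarrow> int" where
  "tT c = (\<Sum>x\<leftarrow>c. (-1) ^ nat \<bar>snd x\<bar> * turn (fst x))"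

definition tW :: "(gen \<times> int) list \<Rightarrow> int" where
  "tW c = (\<Sum>x\<leftarrow>c. snd x)"

definition U :: "(gen \<times> int) list \<Rightarrow> gen list" where
  "U c = map fst c"

end

theory Submission
  imports Defs
begin

text \<open>Rotate the cycle so that it reads \<open>x, u\<^sub>1, a\<^sub>1, \<dots>, u\<^sub>k, a\<^sub>k, t\<close> with \<open>x\<close> a cap
  and \<open>t\<close> a cup. Stack the cap \<open>x\<close>, some full twists of its two strands, one zigzag per
  pair \<open>(u\<^sub>i, a\<^sub>i)\<close> on the upward strand and the cup \<open>t\<close>; crossings next to a cap or cup
  turn \<open>cap\<^sub>r\<close>, \<open>cup\<^sub>r\<close> into \<open>cap\<^sub>l\<close>, \<open>cup\<^sub>l\<close> where the cycle asks for it. Following the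
  strand once around reads the cycle, and twist moves followed by zigzag cancellations reduce
  the diagram to \<open>cap\<^sub>r; cup\<^sub>l\<close>, so it is an unknot. All crossings except those at \<open>x\<close> and in
  the full twists are dictated by the cycle; the full twists supply any even writhe, and the
  crossing at \<open>x\<close> (present exactly when \<open>x = cap\<^sub>l\<close>) supplies \<open>\<plusminus>1\<close>. This matches the
  parity of the writhe still missing precisely because \<open>T(c) = \<plusminus>2\<close> and
  \<open>T(c) \<equiv> t(U(c)) + 2 W(c) (mod 4)\<close>, where \<open>t(U(c))\<close> is the sum of the turning numbers
  of the untwisted cycle.\<close>

fun walk :: "('a \<Rightarrow> 'a) \<Rightarrow> 'a \<Rightarrow> 'a list \<Rightarrow> 'a \<Rightarrow> bool" where
  "walk f p [] q \<longleftrightarrow> p = q"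
| "walk f p (x # xs) q \<longleftrightarrow> p = x \<and> walk f (f x) xs q"

lemma walk_append: "walk f p xs q \<Longrightarrow> walk f q ys r \<Longrightarrow> walk f p (xs @ ys) r"
  by (induction xs arbitrary: p) auto

lemma walk_iff_iterates:
  "walk f p xs q \<longleftrightarrow> xs = map (\<lambda>k. (f ^^ k) p) [0..<length xs] \<and> (f ^^ length xs) p = q"
proof (induction xs arbitrary: p)
  case (Cons x xs)
  have "map (\<lambda>k. (f ^^ k) p) [0..<length (x # xs)] = p # map (\<lambda>k. (f ^^ k) (f p)) [0..<length xs]"
    by (simp add: map_upt_Suc funpow_swap1 del: upt_Suc)
  then show ?case
    using Cons.IH by (auto simp: funpow_swap1)
qed simp

lemma walk_cycle_reachable:
  assumes "walk f p xs p" and "q \<in> set xs" and "r \<in> set xs"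
  shows "\<exists>m. (f ^^ m) q = r"
proof -
  let ?n = "length xs"
  have xs: "xs = map (\<lambda>k. (f ^^ k) p) [0..<?n]" and period: "(f ^^ ?n) p = p"
    using assms(1) by (simp_all add: walk_iff_iterates)
  obtain a b where q: "q = (f ^^ a) p" and r: "r = (f ^^ b) p" and "a < ?n"
    using assms(2,3) by (subst (asm) (1 2) xs) auto
  have "?n - a + b + a = b + ?n"
    using \<open>a < ?n\<close> by simp
  then have "(f ^^ (?n - a + b)) q = (f ^^ b) ((f ^^ ?n) p)"
    unfolding q by (metis comp_apply funpow_add)
  then show ?thesis
    using period r by auto
qed

lemma run_append: "run (xs @ ys) w = (case run xs w of None \<Rightarrow> None | Some w' \<Rightarrow> run ys w')"
  by (induction xs arbitrary: w) (auto split: option.splits)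

definition level_from :: "bool list \<Rightarrow> slice list \<Rightarrow> nat \<Rightarrow> bool list" where
  "level_from w d i = the (run (take i d) w)"

definition points_from :: "bool list \<Rightarrow> slice list \<Rightarrow> (nat \<times> nat) set" where
  "points_from w d = {(i, j). i \<le> length d \<and> j < length (level_from w d i)}"

text \<open>When diagrams whose boundary words are \<open>[]\<close> or \<open>\<up>\<down>\<close> are stacked, the point
  \<open>(top, 0)\<close> of the lower piece is left to the piece above it and the point \<open>(0, 1)\<close> of the
  upper piece to the piece below it, so that the inner points of the pieces partition the points
  of the stack.\<close>

definition inner_points :: "bool list \<Rightarrow> slice list \<Rightarrow> (nat \<times> nat) set" where
  "inner_points w d = points_from w d - {(length d, 0), (0, 1)}"

definition lift :: "nat \<Rightarrow> nat \<times> nat \<Rightarrow> nat \<times> nat" where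
  "lift n p = (n + fst p, snd p)"

lemma inj_on_lift: "inj_on (lift n) A"
  by (simp add: inj_on_def lift_def prod_eq_iff)

lemma lift_comp_lift [simp]: "lift m \<circ> lift n = lift (m + n)"
  by (simp add: fun_eq_iff lift_def)

lemma lift_image_iff: "(i, j) \<in> lift n ` S \<longleftrightarrow> n \<le> i \<and> (i - n, j) \<in> S"
  by (force simp: lift_def image_iff)

lemma lvl_eq_level_from: "lvl d = level_from [] d"
  by (simp add: fun_eq_iff lvl_def level_from_def)

lemma points_eq_points_from: "points d = points_from [] d"
  by (simp add: points_def points_from_def lvl_eq_level_from)

lemma level_from_append_left: "i \<le> length A \<Longrightarrow> level_from w (A @ B) i = level_from w A i"
  by (simp add: level_from_def)

lemma level_from_append_right:
  "run A w = Some w' \<Longrightarrow> level_from w (A @ B) (length A + i) = level_from w' B i"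
  by (simp add: level_from_def run_append)

lemma mem_points_from_append:
  assumes "run A w = Some w'"
  shows "(i, j) \<in> points_from w (A @ B) \<longleftrightarrow>
    i \<le> length A \<and> (i, j) \<in> points_from w A \<or> length A \<le> i \<and> (i - length A, j) \<in> points_from w' B"
  using level_from_append_left[of i A w B] level_from_append_right[OF assms, of B "i - length A"]
  by (cases "i \<le> length A") (auto simp: points_from_def)

lemma mem_points_from_bottom: "(0, j) \<in> points_from w d \<longleftrightarrow> j < length w"
  by (simp add: points_from_def level_from_def)

lemma mem_points_from_top:
  "run d w = Some w' \<Longrightarrow> (length d, j) \<in> points_from w d \<longleftrightarrow> j < length w'"
  by (simp add: points_from_def level_from_def)

lemma points_from_below_top: "(i, j) \<in> points_from w d \<Longrightarrow> i \<le> length d"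
  by (simp add: points_from_def)

lemma points_eq_inner_points: "closed d \<Longrightarrow> points d = inner_points [] d"
  by (auto simp: closed_def points_eq_points_from inner_points_def mem_points_from_top mem_points_from_bottom)

lemma inner_points_append:
  assumes A: "run A w = Some [True, False]"
  shows "inner_points w (A @ B) = inner_points w A \<union> lift (length A) ` inner_points [True, False] B"
    and "inner_points w A \<inter> lift (length A) ` inner_points [True, False] B = {}"
proof -
  have top: "(length A, j) \<in> points_from w A \<longleftrightarrow> j < 2" for j
    using mem_points_from_top[OF A] by (simp add: numeral_2_eq_2)
  have bottom: "(0, j) \<in> points_from [True, False] B \<longleftrightarrow> j < 2" for j
    using mem_points_from_bottom by (simp add: numeral_2_eq_2)
  show "inner_points w (A @ B) = inner_points w A \<union> lift (length A) ` inner_points [True, False] B"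
  proof (rule set_eqI, clarify)
    fix i j
    show "(i, j) \<in> inner_points w (A @ B) \<longleftrightarrow>
      (i, j) \<in> inner_points w A \<union> lift (length A) ` inner_points [True, False] B"
    proof (cases i "length A" rule: linorder_cases)
      case less
      then show ?thesis
        by (simp add: inner_points_def lift_image_iff mem_points_from_append[OF A])
    next
      case equal
      then show ?thesis
        using top bottom by (auto simp: inner_points_def lift_image_iff mem_points_from_append[OF A])
    next
      case greater
      then show ?thesis
        using points_from_below_top[of i j w A]
        by (auto simp: inner_points_def lift_image_iff mem_points_from_append[OF A])
    qed
  qed
  have False if "(i, j) \<in> inner_points w A" and "(i, j) \<in> lift (length A) ` inner_points [True, False] B"
    for i j
    using that top bottom points_from_below_top[of i j w A]
    by (auto simp: inner_points_def lift_image_iff)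
  then show "inner_points w A \<inter> lift (length A) ` inner_points [True, False] B = {}"
    by auto
qed

section \<open>Tangles with traced strands\<close>

definition events :: "slice list \<Rightarrow> (nat \<times> nat) list \<Rightarrow> gen list" where
  "events d ps = concat (map (\<lambda>p. case ev d p of None \<Rightarrow> [] | Some g \<Rightarrow> [g]) ps)"

lemma events_Nil [simp]: "events d [] = []"
  and events_append [simp]: "events d (ps @ qs) = events d ps @ events d qs"
  by (simp_all add: events_def)

lemma knot_of_cycle:
  assumes "closed d" and "walk (nxt d) p ps p" and "distinct ps" and "set ps = points d"
    and "p \<in> points d"
  shows "knot d" and "ccc_from d p = events d ps"
proof -
  show "knot d"
    using assms walk_cycle_reachable[OF assms(2)] by (auto simp: knot_def)
  obtain n where "ps = map (\<lambda>k. (nxt d ^^ k) p) [0..<n]" and "card (points d) = n"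
    using assms(2-4) distinct_card[of ps] by (auto simp: walk_iff_iterates)
  then show "ccc_from d p = events d ps"
    by (simp add: ccc_from_def events_def comp_def)
qed

text \<open>A traced band \<open>M\<close> is a tangle from \<open>\<up>\<down>\<close> to \<open>\<up>\<down>\<close> whose upward strand runs from
  \<open>(0, 0)\<close> to \<open>(top, 0)\<close> through the points \<open>ups\<close>, meeting the caps and cups \<open>E\<close>, and whose
  downward strand runs from \<open>(top, 1)\<close> to \<open>(0, 1)\<close> through \<open>downs\<close>, meeting none. Point lists
  contain the start of a strand but not its end, and everything is required in every context:
  levels are shifted by the height of whatever diagram \<open>A\<close> lies below.\<close>

definition traced_band :: "slice list \<Rightarrow> (nat \<times> nat) list \<Rightarrow> (nat \<times> nat) list \<Rightarrow> gen list \<Rightarrow> bool" where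
  "traced_band M ups downs E \<longleftrightarrow> run M [True, False] = Some [True, False] \<and>
     distinct (ups @ downs) \<and> set (ups @ downs) = inner_points [True, False] M \<and>
     (\<forall>A C. run A [] = Some [True, False] \<longrightarrow>
        walk (nxt (A @ M @ C)) (length A, 0) (map (lift (length A)) ups) (length A + length M, 0) \<and>
        walk (nxt (A @ M @ C)) (length A + length M, 1) (map (lift (length A)) downs) (length A, 1) \<and>
        events (A @ M @ C) (map (lift (length A)) ups) = E \<and>
        events (A @ M @ C) (map (lift (length A)) downs) = [])"

definition traced_cap :: "slice list \<Rightarrow> (nat \<times> nat) list \<Rightarrow> gen list \<Rightarrow> bool" where
  "traced_cap B ps E \<longleftrightarrow> run B [] = Some [True, False] \<and>
     distinct ps \<and> set ps = inner_points [] B \<and>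
     (\<forall>C. walk (nxt (B @ C)) (length B, 1) ps (length B, 0) \<and> events (B @ C) ps = E)"

definition traced_cup :: "slice list \<Rightarrow> (nat \<times> nat) list \<Rightarrow> gen list \<Rightarrow> bool" where
  "traced_cup T ps E \<longleftrightarrow> run T [True, False] = Some [] \<and>
     distinct ps \<and> set ps = inner_points [True, False] T \<and>
     (\<forall>A. run A [] = Some [True, False] \<longrightarrow>
        walk (nxt (A @ T)) (length A, 0) (map (lift (length A)) ps) (length A, 1) \<and>
        events (A @ T) (map (lift (length A)) ps) = E)"

lemma traced_run:
  "traced_cap B ps E \<Longrightarrow> run B [] = Some [True, False]"
  "traced_band M ups downs E \<Longrightarrow> run M [True, False] = Some [True, False]"
  "traced_cup T ps E \<Longrightarrow> run T [True, False] = Some []"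
  by (simp_all add: traced_cap_def traced_band_def traced_cup_def)

lemma traced_band_strands:
  assumes "traced_band M ups downs E" and "run A [] = Some [True, False]"
  shows "walk (nxt (A @ M @ C)) (length A, 0) (map (lift (length A)) ups) (length A + length M, 0)"
    and "walk (nxt (A @ M @ C)) (length A + length M, 1) (map (lift (length A)) downs) (length A, 1)"
    and "events (A @ M @ C) (map (lift (length A)) ups) = E"
    and "events (A @ M @ C) (map (lift (length A)) downs) = []"
  using assms by (simp_all add: traced_band_def)

lemma traced_cap_strand:
  assumes "traced_cap B ps E"
  shows "walk (nxt (B @ C)) (length B, 1) ps (length B, 0)" and "events (B @ C) ps = E"
  using assms by (simp_all add: traced_cap_def)

lemma traced_cup_strand:
  assumes "traced_cup T ps E" and "run A [] = Some [True, False]"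
  shows "walk (nxt (A @ T)) (length A, 0) (map (lift (length A)) ps) (length A, 1)"
    and "events (A @ T) (map (lift (length A)) ps) = E"
  using assms by (simp_all add: traced_cup_def)

lemma traced_band_Nil: "traced_band [] [] [] []"
  by (auto simp: traced_band_def inner_points_def points_from_def level_from_def)

lemma traced_band_append:
  assumes M1: "traced_band M1 U1 D1 E1" and M2: "traced_band M2 U2 D2 E2"
  shows "traced_band (M1 @ M2) (U1 @ map (lift (length M1)) U2) (map (lift (length M1)) D2 @ D1) (E1 @ E2)"
proof -
  let ?l = "lift (length M1)"
  note run1 = traced_run(2)[OF M1] and run2 = traced_run(2)[OF M2]
  have "distinct (U1 @ D1)" "set (U1 @ D1) = inner_points [True, False] M1"
    "distinct (U2 @ D2)" "set (U2 @ D2) = inner_points [True, False] M2"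
    using M1 M2 by (simp_all add: traced_band_def)
  moreover note inner_points_append[OF run1, of M2]
  ultimately have sets: "set ((U1 @ map ?l U2) @ map ?l D2 @ D1) = inner_points [True, False] (M1 @ M2)"
    and "set (U1 @ D1) \<inter> ?l ` set (U2 @ D2) = {}" and "distinct (U1 @ D1)" "distinct (U2 @ D2)"
    by auto
  then have distinct: "distinct ((U1 @ map ?l U2) @ map ?l D2 @ D1)"
    using distinct_map[of ?l "U2 @ D2"] inj_on_lift by auto
  have "walk (nxt (A @ (M1 @ M2) @ C)) (length A, 0)
          (map (lift (length A)) (U1 @ map ?l U2)) (length A + length (M1 @ M2), 0) \<and>
        walk (nxt (A @ (M1 @ M2) @ C)) (length A + length (M1 @ M2), 1)
          (map (lift (length A)) (map ?l D2 @ D1)) (length A, 1) \<and>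
        events (A @ (M1 @ M2) @ C) (map (lift (length A)) (U1 @ map ?l U2)) = E1 @ E2 \<and>
        events (A @ (M1 @ M2) @ C) (map (lift (length A)) (map ?l D2 @ D1)) = []"
    if A: "run A [] = Some [True, False]" for A C
  proof -
    have "run (A @ M1) [] = Some [True, False]"
      using A run1 by (simp add: run_append)
    from traced_band_strands[OF M2 this, of C] traced_band_strands[OF M1 A, of "M2 @ C"]
    show ?thesis
      by (auto intro: walk_append simp: add.assoc)
  qed
  then show ?thesis
    using run1 run2 sets distinct by (simp add: traced_band_def run_append)
qed

lemma traced_cup_append:
  assumes M: "traced_band M ups downs E" and T: "traced_cup T ps E'"
  shows "traced_cup (M @ T) (ups @ map (lift (length M)) ps @ downs) (E @ E')"
proof -
  let ?l = "lift (length M)"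
  note runM = traced_run(2)[OF M] and runT = traced_run(3)[OF T]
  have "distinct (ups @ downs)" "set (ups @ downs) = inner_points [True, False] M"
    "distinct ps" "set ps = inner_points [True, False] T"
    using M T by (simp_all add: traced_band_def traced_cup_def)
  moreover note inner_points_append[OF runM, of T]
  ultimately have sets: "set (ups @ map ?l ps @ downs) = inner_points [True, False] (M @ T)"
    and "set (ups @ downs) \<inter> ?l ` set ps = {}" and "distinct (ups @ downs)" "distinct ps"
    by auto
  then have distinct: "distinct (ups @ map ?l ps @ downs)"
    using distinct_map[of ?l ps] inj_on_lift by auto
  have "walk (nxt (A @ M @ T)) (length A, 0) (map (lift (length A)) (ups @ map ?l ps @ downs))
          (length A, 1) \<and>
        events (A @ M @ T) (map (lift (length A)) (ups @ map ?l ps @ downs)) = E @ E'"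
    if A: "run A [] = Some [True, False]" for A
  proof -
    have "run (A @ M) [] = Some [True, False]"
      using A runM by (simp add: run_append)
    from traced_cup_strand[OF T this] traced_band_strands[OF M A, of T]
    show ?thesis
      by (auto intro!: walk_append)
  qed
  then show ?thesis
    using runM runT sets distinct by (simp add: traced_cup_def run_append)
qed

lemma traced_cap_cup_knot:
  assumes B: "traced_cap B bs E" and T: "traced_cup T ts E'"
  shows "knot (B @ T)" and "(length B, 0) \<in> points (B @ T)"
    and "ccc_from (B @ T) (length B, 0) = E' @ E"
proof -
  let ?ps = "map (lift (length B)) ts @ bs"
  note runB = traced_run(1)[OF B]
  have closed: "closed (B @ T)"
    using runB traced_run(3)[OF T] by (simp add: closed_def run_append)
  have walk: "walk (nxt (B @ T)) (length B, 0) ?ps (length B, 0)"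
    and events: "events (B @ T) ?ps = E' @ E"
    using traced_cup_strand[OF T runB] traced_cap_strand[OF B, of T] by (auto intro: walk_append)
  have "distinct bs" "set bs = inner_points [] B" "distinct ts" "set ts = inner_points [True, False] T"
    using B T by (simp_all add: traced_cap_def traced_cup_def)
  moreover note inner_points_append[OF runB, of T] points_eq_inner_points[OF closed]
  ultimately have set: "set ?ps = points (B @ T)"
    and "set bs \<inter> lift (length B) ` set ts = {}" and "distinct bs" "distinct ts"
    by auto
  then have "distinct ?ps"
    using distinct_map[of "lift (length B)" ts] inj_on_lift by auto
  show start: "(length B, 0) \<in> points (B @ T)"
    using runB by (simp add: points_eq_points_from mem_points_from_append mem_points_from_top)
  show "knot (B @ T)" and "ccc_from (B @ T) (length B, 0) = E' @ E"
    using knot_of_cycle[OF closed walk \<open>distinct ?ps\<close> set start] events by simp_all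
qed

lemma points_from_eq_Union:
  "points_from w d = (\<Union>i\<in>{..length d}. (\<lambda>j. (i, j)) ` {..<length (level_from w d i)})"
  by (auto simp: points_from_def)

lemmas inner_points_simps = inner_points_def points_from_eq_Union level_from_def
  atMost_Suc lessThan_Suc numeral_eq_Suc insert_commute

lemmas strand_simps = lift_def nxt_def ev_def events_def lvl_def run_append nth_append

lemma cap_cases: "is_cap g \<Longrightarrow> g = CapR \<or> g = CapL"
  and cup_cases: "\<not> is_cap g \<Longrightarrow> g = CupR \<or> g = CupL"
  by (cases g; simp)+

definition double_twist :: "bool \<Rightarrow> slice list" where
  "double_twist s = [Cross s 0, Cross s 0]"

definition full_twists :: "nat \<Rightarrow> bool \<Rightarrow> slice list" where
  "full_twists k s = concat (replicate k (double_twist s))"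

text \<open>The upward strand turns down at the cup \<open>u\<close> and up again at the cap \<open>a\<close>; a crossing
  right after \<open>a\<close> (right before \<open>u\<close>) is needed when \<open>a = cap\<^sub>l\<close> (\<open>u = cup\<^sub>l\<close>).\<close>

definition zigzag :: "gen \<Rightarrow> gen \<Rightarrow> slice list" where
  "zigzag a u = [Gen a 0] @ (if a = CapR then [] else [Cross False 0]) @
     (if u = CupR then [] else [Cross False 1]) @ [Gen u 1]"

fun cup_cap_pairs :: "gen list \<Rightarrow> bool" where
  "cup_cap_pairs [] \<longleftrightarrow> True"
| "cup_cap_pairs (u # a # gs) \<longleftrightarrow> \<not> is_cap u \<and> is_cap a \<and> cup_cap_pairs gs"
| "cup_cap_pairs [_] \<longleftrightarrow> False"

fun zigzags :: "gen list \<Rightarrow> slice list" where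
  "zigzags (u # a # gs) = zigzag a u @ zigzags gs"
| "zigzags _ = []"

definition cap_base :: "gen \<Rightarrow> bool \<Rightarrow> slice list" where
  "cap_base x s = (if x = CapR then [Gen CapR 0] else [Gen CapL 0, Cross s 0])"

definition cup_top :: "gen \<Rightarrow> slice list" where
  "cup_top t = (if t = CupL then [Gen CupL 0] else [Cross False 0, Gen CupR 0])"

lemma traced_band_double_twist: "traced_band (double_twist s) [(0, 0), (1, 1)] [(2, 1), (1, 0)] []"
  unfolding traced_band_def double_twist_def
  by (intro conjI allI impI) (auto simp: inner_points_simps strand_simps)

lemma traced_band_full_twists: "\<exists>ups downs. traced_band (full_twists k s) ups downs []"
proof (induction k)
  case 0
  then show ?case
    using traced_band_Nil by (auto simp: full_twists_def)
next
  case (Suc k)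
  then show ?case
    using traced_band_append[OF traced_band_double_twist] by (fastforce simp: full_twists_def)
qed

lemma traced_band_zigzag:
  assumes "is_cap a" and "\<not> is_cap u"
  shows "\<exists>ups downs. traced_band (zigzag a u) ups downs [u, a]"
proof -
  consider "a = CapR" "u = CupR" | "a = CapL" "u = CupR" | "a = CapR" "u = CupL" | "a = CapL" "u = CupL"
    using cap_cases[OF assms(1)] cup_cases[OF assms(2)] by blast
  then show ?thesis
  proof cases
    case 1
    have "traced_band (zigzag a u) [(0,0), (1,2), (1,1), (1,0)] [(2,1), (1,3)] [u, a]"
      unfolding traced_band_def zigzag_def 1
      by (intro conjI allI impI) (auto simp: inner_points_simps strand_simps)
    then show ?thesis by blast
  next
    case 2
    have "traced_band (zigzag a u) [(0,0), (1,2), (2,2), (2,1), (1,0), (1,1), (2,0)]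
      [(3,1), (2,3), (1,3)] [u, a]"
      unfolding traced_band_def zigzag_def 2
      by (intro conjI allI impI) (auto simp: inner_points_simps strand_simps)
    then show ?thesis by blast
  next
    case 3
    have "traced_band (zigzag a u) [(0,0), (1,2), (2,1), (2,2), (1,1), (1,0), (2,0)]
      [(3,1), (2,3), (1,3)] [u, a]"
      unfolding traced_band_def zigzag_def 3
      by (intro conjI allI impI) (auto simp: inner_points_simps strand_simps)
    then show ?thesis by blast
  next
    case 4
    have "traced_band (zigzag a u) [(0,0), (1,2), (2,2), (3,1), (3,2), (2,1), (1,0), (1,1), (2,0), (3,0)]
      [(4,1), (3,3), (2,3), (1,3)] [u, a]"
      unfolding traced_band_def zigzag_def 4
      by (intro conjI allI impI) (auto simp: inner_points_simps strand_simps)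
    then show ?thesis by blast
  qed
qed

lemma traced_band_zigzags: "cup_cap_pairs gs \<Longrightarrow> \<exists>ups downs. traced_band (zigzags gs) ups downs gs"
proof (induction gs rule: zigzags.induct)
  case (1 u a gs)
  then show ?case
    using traced_band_append traced_band_zigzag[of a u] by fastforce
qed (use traced_band_Nil in auto)

lemma traced_cap_base:
  assumes "is_cap x"
  shows "\<exists>ps. traced_cap (cap_base x s) ps [x]"
proof -
  have "traced_cap [Gen CapR 0] [(1,1)] [CapR]"
    and "traced_cap [Gen CapL 0, Cross s 0] [(2,1), (1,0), (1,1)] [CapL]"
    unfolding traced_cap_def by (intro conjI allI; auto simp: inner_points_simps strand_simps)+
  then show ?thesis
    using cap_cases[OF assms] by (auto simp: cap_base_def)
qed

lemma traced_cup_top: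
  assumes "\<not> is_cap t"
  shows "\<exists>ps. traced_cup (cup_top t) ps [t]"
proof -
  have "traced_cup [Gen CupL 0] [(0,0)] [CupL]"
    and "traced_cup [Cross False 0, Gen CupR 0] [(0,0), (1,1), (1,0)] [CupR]"
    unfolding traced_cup_def by (intro conjI allI impI; auto simp: inner_points_simps strand_simps)+
  then show ?thesis
    using cup_cases[OF assms] by (auto simp: cup_top_def)
qed

lemma run_full_twists: "run (full_twists k s) [True, False] = Some [True, False]"
  using traced_band_full_twists traced_run(2) by metis

lemma run_zigzags: "cup_cap_pairs gs \<Longrightarrow> run (zigzags gs) [True, False] = Some [True, False]"
  using traced_band_zigzags traced_run(2) by metis

lemma run_cap_base: "is_cap x \<Longrightarrow> run (cap_base x s) [] = Some [True, False]"
  using traced_cap_base traced_run(1) by metis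

lemma run_cup_top: "\<not> is_cap t \<Longrightarrow> run (cup_top t) [True, False] = Some []"
  using traced_cup_top traced_run(3) by metis

section \<open>Writhe\<close>

definition crossing_sign :: "slice \<Rightarrow> bool list \<Rightarrow> int" where
  "crossing_sign s w = (case s of Gen g k \<Rightarrow> 0
     | Cross b k \<Rightarrow> (if b then 1 else -1) * (if w ! k = w ! Suc k then 1 else -1))"

definition writhe_from :: "bool list \<Rightarrow> slice list \<Rightarrow> int" where
  "writhe_from w d = (\<Sum>i<length d. crossing_sign (d ! i) (level_from w d i))"

lemma writhe_eq_writhe_from: "writhe d = writhe_from [] d"
  unfolding writhe_def writhe_from_def crossing_sign_def lvl_eq_level_from ..

lemma writhe_from_append:
  assumes "run A w = Some w'"
  shows "writhe_from w (A @ B) = writhe_from w A + writhe_from w' B"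
proof -
  have split: "(\<Sum>i<length A + n. f i) = (\<Sum>i<length A. f i) + (\<Sum>i<n. f (length A + i))"
    for f :: "nat \<Rightarrow> int" and n
    by (induction n) simp_all
  have "writhe_from w (A @ B) = (\<Sum>i<length A. crossing_sign ((A @ B) ! i) (level_from w (A @ B) i)) +
      (\<Sum>i<length B. crossing_sign ((A @ B) ! (length A + i)) (level_from w (A @ B) (length A + i)))"
    unfolding writhe_from_def length_append split ..
  also have "\<dots> = writhe_from w A + writhe_from w' B"
    unfolding writhe_from_def
    by (simp add: nth_append level_from_append_left level_from_append_right[OF assms])
  finally show ?thesis .
qed

lemmas writhe_simps = writhe_from_def crossing_sign_def level_from_def lessThan_Suc numeral_eq_Suc

lemma writhe_full_twists: "writhe_from [True, False] (full_twists k s) = 2 * int k * (if s then -1 else 1)"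
proof (induction k)
  case (Suc k)
  have "writhe_from [True, False] (double_twist s) = 2 * (if s then -1 else 1)"
    by (simp add: double_twist_def writhe_simps)
  then show ?case
    using Suc.IH writhe_from_append[of "double_twist s" "[True, False]" "[True, False]"]
    by (simp add: full_twists_def double_twist_def algebra_simps)
qed (simp add: full_twists_def writhe_from_def)

lemma writhe_zigzag:
  "is_cap a \<Longrightarrow> \<not> is_cap u \<Longrightarrow>
    writhe_from [True, False] (zigzag a u) = of_bool (a = CapL) + of_bool (u = CupL)"
  by (auto dest!: cap_cases cup_cases simp: zigzag_def writhe_simps)

lemma writhe_cap_base:
  "is_cap x \<Longrightarrow> writhe_from [] (cap_base x s) = of_bool (x = CapL) * (if s then -1 else 1)"
  by (auto dest!: cap_cases simp: cap_base_def writhe_simps)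

lemma writhe_cup_top: "\<not> is_cap t \<Longrightarrow> writhe_from [True, False] (cup_top t) = of_bool (t = CupR)"
  by (auto dest!: cup_cases simp: cup_top_def writhe_simps)

lemma turn_writhe_zigzags_mod_4:
  "cup_cap_pairs gs \<Longrightarrow> 4 dvd (sum_list (map turn gs) + 2 * writhe_from [True, False] (zigzags gs))"
proof (induction gs rule: zigzags.induct)
  case (1 u a gs)
  then have u: "\<not> is_cap u" and a: "is_cap a" and gs: "cup_cap_pairs gs"
    by simp_all
  have "run (zigzag a u) [True, False] = Some [True, False]"
    using run_zigzags[of "[u, a]"] u a by simp
  then have "sum_list (map turn (u # a # gs)) + 2 * writhe_from [True, False] (zigzags (u # a # gs)) =
    (turn u + turn a + 2 * (of_bool (a = CapL) + of_bool (u = CupL))) +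
    (sum_list (map turn gs) + 2 * writhe_from [True, False] (zigzags gs))"
    by (simp add: writhe_from_append writhe_zigzag[OF a u])
  moreover have "4 dvd (turn u + turn a + 2 * (of_bool (a = CapL) + of_bool (u = CupL)))"
    using cap_cases[OF a] cup_cases[OF u] by auto
  ultimately show ?case
    using "1.IH"[OF gs] by (metis dvd_add)
qed (simp_all add: writhe_from_def)

section \<open>Isotopies to the trivial diagram\<close>

lemma isotopic_refl [simp]: "isotopic d d"
  by (simp add: isotopic_def)

lemma isotopic_trans [trans]: "isotopic d e \<Longrightarrow> isotopic e f \<Longrightarrow> isotopic d f"
  unfolding isotopic_def by (rule equivclp_trans)

lemma isotopic_if_dmove: "dmove d e \<Longrightarrow> closed d \<Longrightarrow> closed e \<Longrightarrow> isotopic d e"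
  unfolding isotopic_def by (rule r_into_equivclp) simp

lemma isotopic_cap_base:
  assumes "is_cap x" and X: "run X [True, False] = Some []"
  shows "isotopic (cap_base x s @ X) (Gen CapR 0 # X)"
proof (cases "x = CapR")
  case False
  have "dmove ([Gen CapL 0, Cross s 0] @ X) ([Gen CapR 0] @ X)"
    using dmove.twist_cap[of CapL "[]" 0 s X] by simp
  then show ?thesis
    using False X by (auto intro!: isotopic_if_dmove simp: cap_base_def closed_def)
qed (simp add: cap_base_def)

lemma isotopic_full_twists:
  assumes X: "run X [True, False] = Some []"
  shows "isotopic (Gen CapR 0 # full_twists k s @ X) (Gen CapR 0 # X)"
proof (induction k)
  case (Suc k)
  let ?Y = "full_twists k s @ X"
  have Y: "run ?Y [True, False] = Some []"
    using X run_full_twists by (simp add: run_append)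
  have "dmove ([Gen CapR 0, Cross s 0] @ Cross s 0 # ?Y) ([Gen CapL 0] @ Cross s 0 # ?Y)"
    using dmove.twist_cap[of CapR "[]" 0 s "Cross s 0 # ?Y"] by simp
  then have "isotopic (Gen CapR 0 # full_twists (Suc k) s @ X) (cap_base CapL s @ ?Y)"
    using Y by (auto intro!: isotopic_if_dmove simp: full_twists_def double_twist_def cap_base_def closed_def)
  also have "isotopic \<dots> (Gen CapR 0 # ?Y)"
    using Y by (rule isotopic_cap_base[rotated]) simp
  finally show ?case
    using Suc.IH by (rule isotopic_trans)
qed (simp add: full_twists_def)

lemma isotopic_zigzag:
  assumes a: "is_cap a" and u: "\<not> is_cap u" and X: "run X [True, False] = Some []"
  shows "isotopic (Gen CapR 0 # zigzag a u @ X) (Gen CapR 0 # X)"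
proof -
  have "isotopic (Gen CapR 0 # zigzag a u @ X) (Gen CapR 0 # zigzag CapR u @ X)"
  proof (cases "a = CapR")
    case False
    let ?R = "(if u = CupR then [] else [Cross False 1]) @ Gen u 1 # X"
    have "dmove ([Gen CapR 0] @ [Gen CapL 0, Cross False 0] @ ?R) ([Gen CapR 0] @ [Gen CapR 0] @ ?R)"
      using dmove.twist_cap[of CapL "[Gen CapR 0]" 0 False ?R] by simp
    moreover have "a = CapL"
      using False cap_cases[OF a] by simp
    ultimately show ?thesis
      using X cup_cases[OF u] by (auto intro!: isotopic_if_dmove simp: zigzag_def closed_def run_append)
  qed simp
  also have "isotopic \<dots> (Gen CapR 0 # zigzag CapR CupR @ X)"
  proof (cases "u = CupR")
    case False
    have "dmove ([Gen CapR 0, Gen CapR 0] @ [Cross False 1, Gen CupL 1] @ X)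
        ([Gen CapR 0, Gen CapR 0] @ [Gen CupR 1] @ X)"
      using dmove.twist_cup[of CupL "[Gen CapR 0, Gen CapR 0]" False 1 X] by simp
    moreover have "u = CupL"
      using False cup_cases[OF u] by simp
    ultimately show ?thesis
      using X by (auto intro!: isotopic_if_dmove simp: zigzag_def closed_def run_append)
  qed simp
  also have "isotopic \<dots> (Gen CapR 0 # X)"
  proof (rule isotopic_if_dmove)
    show "dmove (Gen CapR 0 # zigzag CapR CupR @ X) (Gen CapR 0 # X)"
      using dmove.zig1[of CapR CupR "[Gen CapR 0]" 0 X] by (simp add: zigzag_def)
  qed (use X in \<open>simp_all add: zigzag_def closed_def\<close>)
  finally show ?thesis .
qed

lemma isotopic_zigzags:
  assumes "cup_cap_pairs gs" and "run X [True, False] = Some []"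
  shows "isotopic (Gen CapR 0 # zigzags gs @ X) (Gen CapR 0 # X)"
  using assms
proof (induction gs rule: zigzags.induct)
  case (1 u a gs)
  then have "run (zigzags gs @ X) [True, False] = Some []"
    by (simp add: run_zigzags run_append)
  then have "isotopic (Gen CapR 0 # zigzag a u @ zigzags gs @ X) (Gen CapR 0 # zigzags gs @ X)"
    using "1.prems"(1) by (intro isotopic_zigzag) simp_all
  then show ?case
    using 1 by (auto intro: isotopic_trans)
qed simp_all

lemma isotopic_cup_top:
  assumes "\<not> is_cap t"
  shows "isotopic (Gen CapR 0 # cup_top t) [Gen CapR 0, Gen CupL 0]"
proof (cases "t = CupL")
  case False
  have "dmove ([Gen CapR 0] @ [Cross False 0, Gen CupR 0] @ []) ([Gen CapR 0] @ [Gen CupL 0] @ [])"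
    using dmove.twist_cup[of CupR "[Gen CapR 0]" False 0 "[]"] by simp
  then show ?thesis
    using False by (auto intro!: isotopic_if_dmove simp: cup_top_def closed_def)
qed (simp add: cup_top_def)

lemma sum_list_rotate: "sum_list (rotate n xs) = sum_list (xs :: 'a :: comm_monoid_add list)"
proof -
  let ?k = "n mod length xs"
  have "sum_list (rotate n xs) = sum_list (drop ?k xs) + sum_list (take ?k xs)"
    by (simp add: rotate_drop_take)
  also have "\<dots> = sum_list (take ?k xs @ drop ?k xs)"
    by (simp only: sum_list_append add.commute)
  finally show ?thesis
    by simp
qed

lemma cyc_eq_rotate: "cyc_eq xs (rotate n ys) \<Longrightarrow> cyc_eq xs ys"
proof -
  assume "cyc_eq xs (rotate n ys)"
  then obtain m where m: "rotate m xs = rotate n ys"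
    by (auto simp: cyc_eq_def)
  let ?L = "length ys"
  have "rotate (?L - n mod ?L + m) xs = rotate (?L - n mod ?L + n) ys"
    by (simp add: m flip: rotate_rotate)
  also have "\<dots> = ys"
  proof (cases "?L = 0")
    case False
    have "?L - n mod ?L + n = ?L + (n - n mod ?L)"
      using mod_less_eq_dividend[of n ?L] mod_less_divisor[of ?L n] False by linarith
    also have "\<dots> = ?L * (n div ?L + 1)"
      by (simp add: minus_mod_eq_mult_div)
    finally have "(?L - n mod ?L + n) mod ?L = 0"
      by simp
    then show ?thesis
      by (metis rotate_conv_mod rotate0 id_apply)
  qed simp
  finally show "cyc_eq xs ys"
    unfolding cyc_eq_def by blast
qed

lemma cup_cap_pairs_iff:
  "cup_cap_pairs gs \<longleftrightarrow> even (length gs) \<and> (\<forall>i<length gs. is_cap (gs ! i) \<longleftrightarrow> odd i)"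
proof (induction gs rule: cup_cap_pairs.induct)
  case (2 u a gs)
  have "(\<forall>i<length (u # a # gs). is_cap ((u # a # gs) ! i) \<longleftrightarrow> odd i) \<longleftrightarrow>
      \<not> is_cap u \<and> is_cap a \<and> (\<forall>i<length gs. is_cap (gs ! i) \<longleftrightarrow> odd i)"
    by (simp only: length_Cons All_less_Suc2 nth_Cons_0 nth_Cons_Suc odd_one even_zero even_Suc simp_thms)
  then show ?case
    using "2.IH" by auto
qed simp_all

lemma alternating_parity:
  assumes "alternating c" and "i < length c"
  shows "is_cap (fst (c ! i)) \<longleftrightarrow> (is_cap (fst (c ! 0)) \<longleftrightarrow> even i)"
  using assms(2)
proof (induction i)
  case (Suc i)
  have "Suc i mod length c = Suc i"
    using Suc.prems by simp
  then have "is_cap (fst (c ! i)) \<noteq> is_cap (fst (c ! Suc i))"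
    using assms(1) Suc.prems unfolding alternating_def by (metis Suc_lessD)
  then show ?case
    using Suc by auto
qed simp

lemma alternating_even_length:
  assumes "alternating c" and "c \<noteq> []"
  shows "even (length c)"
proof -
  let ?n = "length c"
  have "Suc (?n - 1) mod ?n = 0" and "?n - 1 < ?n"
    using assms(2) by simp_all
  then have "is_cap (fst (c ! (?n - 1))) \<noteq> is_cap (fst (c ! 0))"
    using assms(1) unfolding alternating_def by metis
  then have "odd (?n - 1)"
    using alternating_parity[OF assms(1), of "?n - 1"] assms(2) by auto
  then show ?thesis
    using assms(2) by simp
qed

lemma alternating_rotate_decompose:
  assumes "alternating c" and "c \<noteq> []"
  obtains n x mid t where "rotate n (U c) = x # mid @ [t]"
    and "is_cap x" and "\<not> is_cap t" and "cup_cap_pairs mid"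
proof -
  let ?n = "of_bool (\<not> is_cap (fst (c ! 0))) :: nat"
  let ?gs = "rotate ?n (U c)"
  have even: "even (length ?gs)"
    using alternating_even_length[OF assms] by (simp add: U_def)
  have parity: "is_cap (?gs ! i) \<longleftrightarrow> even i" if "i < length ?gs" for i
  proof -
    have "even ((i + ?n) mod length c) \<longleftrightarrow> even (i + ?n)"
      using alternating_even_length[OF assms] by (metis even_mod_2_iff mod_mod_cancel)
    then show ?thesis
      using that alternating_parity[OF assms(1), of "(i + ?n) mod length c"] assms(2)
      by (auto simp: U_def nth_rotate)
  qed
  obtain x r where gs: "?gs = x # r"
    using assms(2) by (cases ?gs) (auto simp: U_def)
  with even obtain mid t where r: "r = mid @ [t]"
    by (cases r rule: rev_cases) auto
  have "cup_cap_pairs mid"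
    unfolding cup_cap_pairs_iff
  proof (intro conjI allI impI)
    show "even (length mid)"
      using even gs r by simp
    fix i
    assume "i < length mid"
    then have "mid ! i = ?gs ! Suc i" and "Suc i < length ?gs"
      using gs r by (simp_all add: nth_append)
    then show "is_cap (mid ! i) \<longleftrightarrow> odd i"
      using parity by simp
  qed
  moreover have "is_cap x" and "\<not> is_cap t"
    using parity[of 0] parity[of "length r"] even gs r by (auto simp: nth_append)
  ultimately show ?thesis
    using that gs r by blast
qed

lemma turning_number_mod_4: "4 dvd (tT c - sum_list (map turn (U c)) - 2 * tW c)"
proof (induction c)
  case (Cons e c)
  obtain g w where e: "e = (g, w)"
    by fastforce
  have "(-1 :: int) ^ nat \<bar>w\<bar> = (if even w then 1 else -1)"
    by (simp add: minus_one_power_iff even_nat_iff)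
  then have step: "4 dvd ((-1) ^ nat \<bar>w\<bar> * turn g - turn g - 2 * w)"
    by (cases g; cases "even w"; simp; presburger)
  have "tT (e # c) - sum_list (map turn (U (e # c))) - 2 * tW (e # c) =
      ((-1) ^ nat \<bar>w\<bar> * turn g - turn g - 2 * w) + (tT c - sum_list (map turn (U c)) - 2 * tW c)"
    by (simp add: e tT_def tW_def U_def)
  then show ?case
    using step Cons.IH by (metis dvd_add)
qed (simp add: tT_def tW_def U_def)

section \<open>The realising diagram\<close>

definition standard_diagram :: "gen \<Rightarrow> gen list \<Rightarrow> gen \<Rightarrow> nat \<Rightarrow> bool \<Rightarrow> slice list" where
  "standard_diagram x mid t k s = cap_base x s @ (full_twists k s @ zigzags mid) @ cup_top t"

lemma standard_diagram_knot:
  assumes "is_cap x" and "\<not> is_cap t" and "cup_cap_pairs mid"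
  shows "knot (standard_diagram x mid t k s)"
    and "\<exists>p\<in>points (standard_diagram x mid t k s).
      cyc_eq (ccc_from (standard_diagram x mid t k s) p) (x # mid @ [t])"
proof -
  obtain bs where B: "traced_cap (cap_base x s) bs [x]"
    using traced_cap_base[OF assms(1)] by blast
  obtain ups downs where "traced_band (full_twists k s @ zigzags mid) ups downs mid"
    using traced_band_append[of "full_twists k s" _ _ "[]" "zigzags mid" _ _ mid]
      traced_band_full_twists[of k s] traced_band_zigzags[OF assms(3)] by fastforce
  moreover obtain ts where "traced_cup (cup_top t) ts [t]"
    using traced_cup_top[OF assms(2)] by blast
  ultimately obtain ps where T: "traced_cup ((full_twists k s @ zigzags mid) @ cup_top t) ps (mid @ [t])"
    using traced_cup_append by blast
  note knot = traced_cap_cup_knot[OF B T, folded standard_diagram_def]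
  show "knot (standard_diagram x mid t k s)"
    by (rule knot(1))
  have "cyc_eq ((mid @ [t]) @ [x]) (x # mid @ [t])"
    unfolding cyc_eq_def by (metis append_Cons append_Nil rotate_append)
  then show "\<exists>p\<in>points (standard_diagram x mid t k s).
      cyc_eq (ccc_from (standard_diagram x mid t k s) p) (x # mid @ [t])"
    using knot(2,3) by metis
qed

lemma standard_diagram_isotopic_unknot:
  assumes "is_cap x" and "\<not> is_cap t" and "cup_cap_pairs mid"
  shows "isotopic (standard_diagram x mid t k s) [Gen CapR 0, Gen CupL 0]"
proof -
  let ?T = "cup_top t"
  have runs: "run ?T [True, False] = Some []" "run (zigzags mid @ ?T) [True, False] = Some []"
    "run (full_twists k s @ zigzags mid @ ?T) [True, False] = Some []"
    using assms by (simp_all add: run_cup_top run_zigzags run_full_twists run_append)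
  have "isotopic (standard_diagram x mid t k s) (Gen CapR 0 # full_twists k s @ zigzags mid @ ?T)"
    unfolding standard_diagram_def append_assoc by (rule isotopic_cap_base[OF assms(1) runs(3)])
  also have "isotopic \<dots> (Gen CapR 0 # zigzags mid @ ?T)"
    by (rule isotopic_full_twists[OF runs(2)])
  also have "isotopic \<dots> (Gen CapR 0 # ?T)"
    by (rule isotopic_zigzags[OF assms(3) runs(1)])
  also have "isotopic \<dots> [Gen CapR 0, Gen CupL 0]"
    by (rule isotopic_cup_top[OF assms(2)])
  finally show ?thesis .
qed

lemma standard_diagram_writhe:
  assumes "is_cap x" and "cup_cap_pairs mid"
  shows "writhe (standard_diagram x mid t k s) =
    (if s then -1 else 1) * (of_bool (x = CapL) + 2 * int k) +
    writhe_from [True, False] (zigzags mid) + writhe_from [True, False] (cup_top t)"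
  using assms
  by (simp add: standard_diagram_def writhe_eq_writhe_from writhe_from_append run_cap_base run_full_twists
      run_zigzags writhe_cap_base writhe_full_twists algebra_simps)

lemma missing_writhe_parity:
  assumes x: "is_cap x" and t: "\<not> is_cap t" and mid: "cup_cap_pairs mid"
    and turning: "4 dvd (sum_list (map turn (x # mid @ [t])) + 2 * w - 2)"
  shows "odd (w - writhe_from [True, False] (zigzags mid) - writhe_from [True, False] (cup_top t)) \<longleftrightarrow>
    x = CapL"
proof -
  define v where "v = w - writhe_from [True, False] (zigzags mid) - writhe_from [True, False] (cup_top t)"
  have "turn x + 2 * of_bool (x = CapL) = 1"
    using cap_cases[OF x] by auto
  moreover have "turn t + 2 * writhe_from [True, False] (cup_top t) = 1"
    using cup_cases[OF t] writhe_cup_top[OF t] by auto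
  ultimately have eq: "2 * (v - of_bool (x = CapL)) = (sum_list (map turn (x # mid @ [t])) + 2 * w - 2) -
      (sum_list (map turn mid) + 2 * writhe_from [True, False] (zigzags mid))"
    by (simp add: v_def)
  have "4 dvd (2 * (v - of_bool (x = CapL)))"
    unfolding eq by (rule dvd_diff[OF turning turn_writhe_zigzags_mod_4[OF mid]])
  then obtain q where "2 * (v - of_bool (x = CapL)) = 4 * q"
    by (elim dvdE)
  then have "v = 2 * q + of_bool (x = CapL)"
    by simp
  then show ?thesis
    unfolding v_def[symmetric] by (cases "x = CapL") simp_all
qed

lemma unknot_diagram_with_cycle:
  assumes x: "is_cap x" and t: "\<not> is_cap t" and mid: "cup_cap_pairs mid"
    and turning: "4 dvd (sum_list (map turn (x # mid @ [t])) + 2 * w - 2)"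
  shows "\<exists>g. unknot_diagram g \<and> writhe g = w \<and> (\<exists>p\<in>points g. cyc_eq (ccc_from g p) (x # mid @ [t]))"
proof -
  \<comment> \<open>the writhe left for the crossing at \<open>x\<close> and the full twists\<close>
  define v where "v = w - writhe_from [True, False] (zigzags mid) - writhe_from [True, False] (cup_top t)"
  have "of_bool (x = CapL) = \<bar>v\<bar> mod 2"
    using missing_writhe_parity[OF assms] unfolding v_def[symmetric]
    by (cases "x = CapL") (simp_all add: odd_iff_mod_2_eq_one abs_if zmod_zminus1_eq_if)
  define g where "g = standard_diagram x mid t (nat (\<bar>v\<bar> div 2)) (v < 0)"
  have "writhe g = (if v < 0 then -1 else 1) * (\<bar>v\<bar> mod 2 + 2 * (\<bar>v\<bar> div 2)) + (w - v)"
    unfolding g_def standard_diagram_writhe[OF x mid] \<open>of_bool (x = CapL) = \<bar>v\<bar> mod 2\<close>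
    by (simp add: v_def)
  also have "\<dots> = w"
    by simp
  finally have "writhe g = w" .
  moreover have "unknot_diagram g"
    unfolding unknot_diagram_def g_def
    using standard_diagram_knot(1)[OF x t mid] standard_diagram_isotopic_unknot[OF x t mid] by blast
  ultimately show ?thesis
    using standard_diagram_knot(2)[OF x t mid] unfolding g_def by blast
qed

theorem mainTheorem4:
  fixes c :: "(gen \<times> int) list"
  assumes "alternating c"
    and "tT c = 2 \<or> tT c = -2"
  shows "\<exists>g. unknot_diagram g \<and> writhe g = tW c \<and>
           (\<exists>p \<in> points g. cyc_eq (ccc_from g p) (U c))"
proof -
  have "c \<noteq> []"
    using assms(2) by (auto simp: tT_def)
  then obtain n x mid t where cycle: "rotate n (U c) = x # mid @ [t]"
    and x: "is_cap x" and t: "\<not> is_cap t" and mid: "cup_cap_pairs mid"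
    using alternating_rotate_decompose[OF assms(1)] by blast
  have "sum_list (map turn (x # mid @ [t])) = sum_list (map turn (U c))"
    unfolding cycle[symmetric] rotate_map[symmetric] by (rule sum_list_rotate)
  moreover have "4 dvd (S + 2 * W - 2)" if "4 dvd (T - S - 2 * W)" and "T = 2 \<or> T = -2" for T S W :: int
    using that by presburger
  ultimately have "4 dvd (sum_list (map turn (x # mid @ [t])) + 2 * tW c - 2)"
    using turning_number_mod_4[of c] assms(2) by simp
  then obtain g p where "unknot_diagram g" "writhe g = tW c" "p \<in> points g"
    "cyc_eq (ccc_from g p) (rotate n (U c))"
    using unknot_diagram_with_cycle[OF x t mid] unfolding cycle by blast
  then show ?thesis
    using cyc_eq_rotate by blast
qed

end
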